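(* For every odd integer $n\ge 5$ there exists a square torus $T^2=\mathbb{R}^2/\{(2\pi\tilde k a,2\pi\tilde l a):\tilde k,\tilde l\in\mathbb{Z}\}$, for some $a>0$, with its flat metric, that admits a (full, isometric) proper-biharmonic immersion into the unit sphere $\mathbb{S}^n$ with constant mean curvature.
   Context: A map $\phi:(M,g)\to(N,\tilde g)$ between Riemannian manifolds is biharmonic if it is a critical point of the bienergy $E_2(\phi)=\frac12\int_M|\tau(\phi)|^2v_g$, equivalently if $\tau_2(\phi)=-\Delta\tau(\phi)-\operatorname{trace}R^N(d\phi,\tau(\phi))d\phi=0$, where $\tau(\phi)$ is the tension field; it is proper-biharmonic if biharmonic but not harmonic. Constant mean curvature (CMC) means $|H|$ is constant, $H$ the mean curvature vector field. Immersions are isometric and full, i.e. their image does not lie in any totally geodesic sphere $\mathbb{S}^{n'}\subset\mathbb{S}^n$ with $n'<n$. *)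

theory Defs
  imports "HOL-Analysis.Analysis"
begin

text \<open>Maps from R^2 (coordinates (x,y), flat metric dx^2+dy^2) into R^(N) = real^'n.
  The unit sphere S^n sits in real^'n with n = CARD('n) - 1.\<close>

definition pdx :: "(real \<times> real \<Rightarrow> 'a::real_normed_vector) \<Rightarrow> real \<times> real \<Rightarrow> 'a" where
  "pdx f = (\<lambda>(x,y). vector_derivative (\<lambda>t. f (t,y)) (at x))"

definition pdy :: "(real \<times> real \<Rightarrow> 'a::real_normed_vector) \<Rightarrow> real \<times> real \<Rightarrow> 'a" where
  "pdy f = (\<lambda>(x,y). vector_derivative (\<lambda>t. f (x,t)) (at y))"

fun iter_pd :: "bool list \<Rightarrow> (real \<times> real \<Rightarrow> 'a::real_normed_vector) \<Rightarrow> real \<times> real \<Rightarrow> 'a" where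
  "iter_pd [] f = f"
| "iter_pd (b # bs) f = (if b then pdx else pdy) (iter_pd bs f)"

definition smooth2 :: "(real \<times> real \<Rightarrow> 'a::real_normed_vector) \<Rightarrow> bool" where
  "smooth2 f \<longleftrightarrow> (\<forall>bs. continuous_on UNIV (iter_pd bs f) \<and>
      (\<forall>x y. (\<lambda>t. iter_pd bs f (t,y)) differentiable (at x) \<and>
             (\<lambda>t. iter_pd bs f (x,t)) differentiable (at y)))"

text \<open>Induced (pull-back) Levi-Civita connection of S^n along phi, acting on a vector
  field V along phi tangent to the sphere: tangential projection of the ambient derivative.\<close>
definition nabla_x :: "(real \<times> real \<Rightarrow> real^'n) \<Rightarrow> (real \<times> real \<Rightarrow> real^'n) \<Rightarrow> real \<times> real \<Rightarrow> real^'n" where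
  "nabla_x \<phi> V = (\<lambda>p. pdx V p - (pdx V p \<bullet> \<phi> p) *\<^sub>R \<phi> p)"

definition nabla_y :: "(real \<times> real \<Rightarrow> real^'n) \<Rightarrow> (real \<times> real \<Rightarrow> real^'n) \<Rightarrow> real \<times> real \<Rightarrow> real^'n" where
  "nabla_y \<phi> V = (\<lambda>p. pdy V p - (pdy V p \<bullet> \<phi> p) *\<^sub>R \<phi> p)"

text \<open>Tension field tau(phi) = trace nabla d phi (orthonormal frame d/dx, d/dy, which is parallel).\<close>
definition tension :: "(real \<times> real \<Rightarrow> real^'n) \<Rightarrow> real \<times> real \<Rightarrow> real^'n" where
  "tension \<phi> = (\<lambda>p. nabla_x \<phi> (pdx \<phi>) p + nabla_y \<phi> (pdy \<phi>) p)"

definition sphere_curv :: "real^'n \<Rightarrow> real^'n \<Rightarrow> real^'n \<Rightarrow> real^'n" where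
  "sphere_curv X Y Z = (Y \<bullet> Z) *\<^sub>R X - (X \<bullet> Z) *\<^sub>R Y"

text \<open>Bitension field tau_2 = - Delta tau - trace R(d phi, tau) d phi, with the rough Laplacian
  Delta = - trace (nabla nabla - nabla_nabla); in the flat frame -Delta tau = sum_i nabla_i nabla_i tau.\<close>
definition bitension :: "(real \<times> real \<Rightarrow> real^'n) \<Rightarrow> real \<times> real \<Rightarrow> real^'n" where
  "bitension \<phi> = (let \<tau> = tension \<phi> in
     (\<lambda>p. nabla_x \<phi> (nabla_x \<phi> \<tau>) p + nabla_y \<phi> (nabla_y \<phi> \<tau>) p
          - (sphere_curv (pdx \<phi> p) (\<tau> p) (pdx \<phi> p) + sphere_curv (pdy \<phi> p) (\<tau> p) (pdy \<phi> p))))"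

definition mean_curv :: "(real \<times> real \<Rightarrow> real^'n) \<Rightarrow> real \<times> real \<Rightarrow> real^'n" where
  "mean_curv \<phi> = (\<lambda>p. (1/2) *\<^sub>R tension \<phi> p)"

text \<open>phi is the lift of a map from the square torus R^2 / (2 pi a Z)^2.\<close>
definition square_torus_periodic :: "real \<Rightarrow> (real \<times> real \<Rightarrow> 'a) \<Rightarrow> bool" where
  "square_torus_periodic a \<phi> \<longleftrightarrow>
     (\<forall>x y. \<phi> (x + 2*pi*a, y) = \<phi> (x,y) \<and> \<phi> (x, y + 2*pi*a) = \<phi> (x,y))"

definition isometric_immersion_sphere :: "(real \<times> real \<Rightarrow> real^'n) \<Rightarrow> bool" where
  "isometric_immersion_sphere \<phi> \<longleftrightarrow> smooth2 \<phi> \<and> (\<forall>p. norm (\<phi> p) = 1) \<and>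
     (\<forall>p. pdx \<phi> p \<bullet> pdx \<phi> p = 1 \<and> pdy \<phi> p \<bullet> pdy \<phi> p = 1 \<and> pdx \<phi> p \<bullet> pdy \<phi> p = 0)"

text \<open>Full: image not contained in a totally geodesic proper subsphere, i.e. in no
  hyperplane through the origin.\<close>
definition full_map :: "(real \<times> real \<Rightarrow> real^'n) \<Rightarrow> bool" where
  "full_map \<phi> \<longleftrightarrow> \<not> (\<exists>v. v \<noteq> 0 \<and> (\<forall>p. v \<bullet> \<phi> p = 0))"

definition biharmonic :: "(real \<times> real \<Rightarrow> real^'n) \<Rightarrow> bool" where
  "biharmonic \<phi> \<longleftrightarrow> (\<forall>p. bitension \<phi> p = 0)"

definition harmonic :: "(real \<times> real \<Rightarrow> real^'n) \<Rightarrow> bool" where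
  "harmonic \<phi> \<longleftrightarrow> (\<forall>p. tension \<phi> p = 0)"

definition proper_biharmonic :: "(real \<times> real \<Rightarrow> real^'n) \<Rightarrow> bool" where
  "proper_biharmonic \<phi> \<longleftrightarrow> biharmonic \<phi> \<and> \<not> harmonic \<phi>"

definition CMC :: "(real \<times> real \<Rightarrow> real^'n) \<Rightarrow> bool" where
  "CMC \<phi> \<longleftrightarrow> (\<exists>c. \<forall>p. norm (mean_curv \<phi> p) = c)"

end

theory Submission
  imports Defs
begin

text \<open>The map (x, y) \<mapsto> \<Sum>_j r_j exp (i (Re \<xi>_j x + Im \<xi>_j y)), read in \<complex>^m = \<real>^(2m),
  takes values in the unit sphere and is an isometric immersion of the flat plane as soon as
  \<Sum> r_j^2 = 1, \<Sum> r_j^2 |\<xi>_j|^2 = 2 and \<Sum> r_j^2 \<xi>_j^2 = 0 in \<complex>. Its tension field multiplies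
  the j-th coefficient by 2 - |\<xi>_j|^2, so it has constant length, and the bitension field has
  coefficients r_j (|\<xi>_j|^2 - \<alpha>) (|\<xi>_j|^2 - \<beta>) once |\<xi>_j|^2 takes only two values \<alpha>, \<beta> with
  \<alpha> + \<beta> = 4. Frequencies that are pairwise distinct up to sign give linearly independent
  components, so the map is full, and frequencies in a^-1 \<int>[i] make it 2\<pi>a-periodic.

  It remains to find, for every m \<ge> 3, m Gaussian integers on two circles with suitable weights:
  the points R (s + i) / (s - i), 2 \<le> s \<le> c + 1, and their rotations by i lie on the circle of
  radius R = 4 \<Prod> (s^2 + 1) and cancel in \<Sum> w \<gamma>^2, while the real point R balances
  4i (m even) or \<plusminus>3 + 5i (m odd) on a second circle.\<close>

section \<open>Superpositions of circles\<close>

text \<open>Component j is the circle c_j exp (i (Re \<xi>_j x + Im \<xi>_j y)) in the plane spanned by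
  E (j, False) and E (j, True).\<close>
definition torus_map ::
    "('i \<times> bool \<Rightarrow> 'v::real_normed_vector) \<Rightarrow> 'i set \<Rightarrow> ('i \<Rightarrow> complex) \<Rightarrow> ('i \<Rightarrow> complex) \<Rightarrow> real \<times> real \<Rightarrow> 'v" where
  "torus_map E F \<xi> c = (\<lambda>(x,y). \<Sum>j\<in>F.
      (Re (c j) * cos (Re (\<xi> j) * x + Im (\<xi> j) * y) - Im (c j) * sin (Re (\<xi> j) * x + Im (\<xi> j) * y)) *\<^sub>R E (j, False)
    + (Re (c j) * sin (Re (\<xi> j) * x + Im (\<xi> j) * y) + Im (c j) * cos (Re (\<xi> j) * x + Im (\<xi> j) * y)) *\<^sub>R E (j, True))"

lemma torus_map_has_derivative_x:
  "((\<lambda>t. torus_map E F \<xi> c (t, y)) has_vector_derivative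
     torus_map E F \<xi> (\<lambda>j. \<i> * of_real (Re (\<xi> j)) * c j) (x, y)) (at x)"
  unfolding torus_map_def split
  apply (rule derivative_eq_intros refl | simp)+
  apply (rule sum.cong, simp)
  apply (simp add: algebra_simps)
  done

lemma torus_map_has_derivative_y:
  "((\<lambda>t. torus_map E F \<xi> c (x, t)) has_vector_derivative
     torus_map E F \<xi> (\<lambda>j. \<i> * of_real (Im (\<xi> j)) * c j) (x, y)) (at y)"
  unfolding torus_map_def split
  apply (rule derivative_eq_intros refl | simp)+
  apply (rule sum.cong, simp)
  apply (simp add: algebra_simps)
  done

lemma pdx_torus_map: "pdx (torus_map E F \<xi> c) = torus_map E F \<xi> (\<lambda>j. \<i> * of_real (Re (\<xi> j)) * c j)"
  unfolding pdx_def by (rule ext) (auto intro!: vector_derivative_at torus_map_has_derivative_x)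

lemma pdy_torus_map: "pdy (torus_map E F \<xi> c) = torus_map E F \<xi> (\<lambda>j. \<i> * of_real (Im (\<xi> j)) * c j)"
  unfolding pdy_def by (rule ext) (auto intro!: vector_derivative_at torus_map_has_derivative_y)

lemma iter_pd_torus_map: "\<exists>c'. iter_pd bs (torus_map E F \<xi> c) = torus_map E F \<xi> c'"
  by (induction bs) (auto simp: pdx_torus_map pdy_torus_map)

lemma smooth2_torus_map: "smooth2 (torus_map E F \<xi> c)"
  unfolding smooth2_def
proof (intro allI conjI)
  fix bs x y
  obtain c' where c': "iter_pd bs (torus_map E F \<xi> c) = torus_map E F \<xi> c'"
    using iter_pd_torus_map by blast
  show "continuous_on UNIV (iter_pd bs (torus_map E F \<xi> c))"
    unfolding c' unfolding torus_map_def split_def by (intro continuous_intros)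
  show "(\<lambda>t. iter_pd bs (torus_map E F \<xi> c) (t, y)) differentiable at x"
    unfolding c' using torus_map_has_derivative_x by (rule differentiableI_vector)
  show "(\<lambda>t. iter_pd bs (torus_map E F \<xi> c) (x, t)) differentiable at y"
    unfolding c' using torus_map_has_derivative_y by (rule differentiableI_vector)
qed

lemma torus_map_cong: "(\<And>j. j \<in> F \<Longrightarrow> c j = d j) \<Longrightarrow> torus_map E F \<xi> c = torus_map E F \<xi> d"
  unfolding torus_map_def by (intro ext) (auto intro!: sum.cong simp: split_def)

lemma torus_map_add: "torus_map E F \<xi> c p + torus_map E F \<xi> d p = torus_map E F \<xi> (\<lambda>j. c j + d j) p"
  unfolding torus_map_def split_def sum.distrib[symmetric]
  by (intro sum.cong refl) (simp add: algebra_simps)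

lemma torus_map_diff: "torus_map E F \<xi> c p - torus_map E F \<xi> d p = torus_map E F \<xi> (\<lambda>j. c j - d j) p"
  unfolding torus_map_def split_def sum_subtractf[symmetric]
  by (intro sum.cong refl) (simp add: algebra_simps)

lemma scaleR_torus_map: "s *\<^sub>R torus_map E F \<xi> c p = torus_map E F \<xi> (\<lambda>j. of_real s * c j) p"
  unfolding torus_map_def split_def scaleR_sum_right
  by (intro sum.cong refl) (simp add: algebra_simps)

lemma torus_map_zero: "torus_map E F \<xi> (\<lambda>j. 0) p = 0"
  unfolding torus_map_def split_def by simp

lemma inner_torus_map:
  fixes E :: "'i \<times> bool \<Rightarrow> 'v::real_inner"
  assumes "finite F"
    and orth: "\<And>u v. u \<in> F \<times> UNIV \<Longrightarrow> v \<in> F \<times> UNIV \<Longrightarrow> inner (E u) (E v) = (if u = v then 1 else 0)"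
  shows "inner (torus_map E F \<xi> c p) (torus_map E F \<xi> d p) = (\<Sum>j\<in>F. Re (cnj (c j) * d j))"
proof -
  obtain x y where p: "p = (x, y)" by fastforce
  define \<theta> where "\<theta> j = Re (\<xi> j) * x + Im (\<xi> j) * y" for j
  define T where "T e j = (Re (e j) * cos (\<theta> j) - Im (e j) * sin (\<theta> j)) *\<^sub>R E (j, False)
    + (Re (e j) * sin (\<theta> j) + Im (e j) * cos (\<theta> j)) *\<^sub>R E (j, True)" for e :: "'i \<Rightarrow> complex" and j
  have rot: "(Rc * cos t - Ic * sin t) * (Rd * cos t - Id * sin t) + (Rc * sin t + Ic * cos t) * (Rd * sin t + Id * cos t)
      = Rc * Rd + Ic * Id" for Rc Ic Rd Id t :: real
  proof -
    have "(Rc * cos t - Ic * sin t) * (Rd * cos t - Id * sin t) + (Rc * sin t + Ic * cos t) * (Rd * sin t + Id * cos t)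
        = (Rc * Rd + Ic * Id) * ((sin t)\<^sup>2 + (cos t)\<^sup>2)"
      unfolding power2_eq_square by algebra
    then show ?thesis by simp
  qed
  have inner_terms: "inner (T c j) (T d k) = (if j = k then Re (cnj (c j) * d j) else 0)" if "j \<in> F" "k \<in> F" for j k
    using that by (cases "j = k") (simp_all add: T_def inner_add_left inner_add_right orth rot)
  have "torus_map E F \<xi> e p = (\<Sum>j\<in>F. T e j)" for e
    unfolding p torus_map_def T_def \<theta>_def by simp
  then have "inner (torus_map E F \<xi> c p) (torus_map E F \<xi> d p) = (\<Sum>k\<in>F. \<Sum>j\<in>F. inner (T c j) (T d k))"
    by (simp add: inner_sum_left inner_sum_right)
  also have "\<dots> = (\<Sum>k\<in>F. \<Sum>j\<in>F. if j = k then Re (cnj (c j) * d j) else 0)"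
    by (intro sum.cong refl) (simp add: inner_terms)
  finally show ?thesis using \<open>finite F\<close> by simp
qed

section \<open>Biharmonic tori in spheres\<close>

lemma sphere_curv_unit_orth: "X \<bullet> X = 1 \<Longrightarrow> Y \<bullet> X = 0 \<Longrightarrow> sphere_curv X Y X = - Y"
  unfolding sphere_curv_def by simp

lemma square_torus_periodic_torus_map:
  assumes "\<And>j. j \<in> F \<Longrightarrow> Re (\<xi> j) * a \<in> \<int> \<and> Im (\<xi> j) * a \<in> \<int>"
  shows "square_torus_periodic a (torus_map E F \<xi> c)"
proof -
  have shift: "cos (\<theta> + s * (2 * pi)) = cos \<theta>" "sin (\<theta> + s * (2 * pi)) = sin \<theta>" if "s \<in> \<int>" for \<theta> s
    using that cos.plus_of_int[of \<theta>] sin.plus_of_int[of \<theta>] by (auto elim!: Ints_cases)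
  have "Re (\<xi> j) * (x + 2 * pi * a) + Im (\<xi> j) * y = (Re (\<xi> j) * x + Im (\<xi> j) * y) + (Re (\<xi> j) * a) * (2 * pi)"
    "Re (\<xi> j) * x + Im (\<xi> j) * (y + 2 * pi * a) = (Re (\<xi> j) * x + Im (\<xi> j) * y) + (Im (\<xi> j) * a) * (2 * pi)"
    for j x y by (simp_all add: algebra_simps)
  then show ?thesis
    unfolding square_torus_periodic_def torus_map_def split
    by (intro allI conjI sum.cong refl) (simp_all only: shift assms)
qed

locale biharmonic_torus =
  fixes E :: "'i \<times> bool \<Rightarrow> real^'n" and F :: "'i set" and \<xi> :: "'i \<Rightarrow> complex"
    and r :: "'i \<Rightarrow> real" and \<alpha> \<beta> :: real
  assumes finite_F: "finite F"
    and orthonormal: "\<And>u v. u \<in> F \<times> UNIV \<Longrightarrow> v \<in> F \<times> UNIV \<Longrightarrow> E u \<bullet> E v = (if u = v then 1 else 0)"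
    and sum_r_sq: "(\<Sum>j\<in>F. (r j)\<^sup>2) = 1"
    and sum_norm_sq: "(\<Sum>j\<in>F. (r j)\<^sup>2 * (cmod (\<xi> j))\<^sup>2) = 2"
    and sum_sq: "(\<Sum>j\<in>F. of_real ((r j)\<^sup>2) * (\<xi> j)\<^sup>2) = 0"
    and alpha_plus_beta: "\<alpha> + \<beta> = 4"
    and two_norms: "\<And>j. j \<in> F \<Longrightarrow> (cmod (\<xi> j))\<^sup>2 = \<alpha> \<or> (cmod (\<xi> j))\<^sup>2 = \<beta>"
begin

abbreviation T :: "('i \<Rightarrow> complex) \<Rightarrow> real \<times> real \<Rightarrow> real^'n" where
  "T \<equiv> torus_map E F \<xi>"

abbreviation \<phi> :: "real \<times> real \<Rightarrow> real^'n" where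
  "\<phi> \<equiv> T (\<lambda>j. of_real (r j))"

definition lam :: "'i \<Rightarrow> real" where
  "lam j = (cmod (\<xi> j))\<^sup>2"

lemma lam_eq: "lam j = (Re (\<xi> j))\<^sup>2 + (Im (\<xi> j))\<^sup>2"
  unfolding lam_def by (rule cmod_power2)

lemma inner_T: "T c p \<bullet> T d p = (\<Sum>j\<in>F. Re (cnj (c j) * d j))"
  using finite_F orthonormal by (rule inner_torus_map)

lemma sum_Re_sq: "(\<Sum>j\<in>F. (r j)\<^sup>2 * (Re (\<xi> j))\<^sup>2) = 1"
  and sum_Im_sq: "(\<Sum>j\<in>F. (r j)\<^sup>2 * (Im (\<xi> j))\<^sup>2) = 1"
  and sum_Re_Im: "(\<Sum>j\<in>F. (r j)\<^sup>2 * (Re (\<xi> j) * Im (\<xi> j))) = 0"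
proof -
  have Re: "(\<Sum>j\<in>F. (r j)\<^sup>2 * ((Re (\<xi> j))\<^sup>2 - (Im (\<xi> j))\<^sup>2)) = 0"
    using arg_cong[OF sum_sq, of Re] by (simp add: Re_power2)
  moreover have "(\<Sum>j\<in>F. (r j)\<^sup>2 * ((Re (\<xi> j))\<^sup>2 + (Im (\<xi> j))\<^sup>2)) = 2"
    using sum_norm_sq by (simp add: cmod_power2)
  ultimately show "(\<Sum>j\<in>F. (r j)\<^sup>2 * (Re (\<xi> j))\<^sup>2) = 1" "(\<Sum>j\<in>F. (r j)\<^sup>2 * (Im (\<xi> j))\<^sup>2) = 1"
    by (simp_all add: algebra_simps sum.distrib sum_subtractf)
  show "(\<Sum>j\<in>F. (r j)\<^sup>2 * (Re (\<xi> j) * Im (\<xi> j))) = 0"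
  proof -
    have "2 * (\<Sum>j\<in>F. (r j)\<^sup>2 * (Re (\<xi> j) * Im (\<xi> j))) = 0"
      using arg_cong[OF sum_sq, of Im] by (simp add: Im_power2 sum_distrib_left mult_ac)
    then show ?thesis by simp
  qed
qed

lemma nabla_x_T: "nabla_x \<phi> (T c) =
    T (\<lambda>j. \<i> * of_real (Re (\<xi> j)) * c j - of_real (\<Sum>k\<in>F. Re (cnj (\<i> * of_real (Re (\<xi> k)) * c k) * r k)) * r j)"
  unfolding nabla_x_def pdx_torus_map by (rule ext) (simp add: inner_T scaleR_torus_map torus_map_diff)

lemma nabla_y_T: "nabla_y \<phi> (T c) =
    T (\<lambda>j. \<i> * of_real (Im (\<xi> j)) * c j - of_real (\<Sum>k\<in>F. Re (cnj (\<i> * of_real (Im (\<xi> k)) * c k) * r k)) * r j)"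
  unfolding nabla_y_def pdy_torus_map by (rule ext) (simp add: inner_T scaleR_torus_map torus_map_diff)

lemma nabla_phi: "nabla_x \<phi> \<phi> = pdx \<phi>" "nabla_y \<phi> \<phi> = pdy \<phi>"
  unfolding nabla_x_T nabla_y_T pdx_torus_map pdy_torus_map by simp_all

lemma nabla_sq_T_real:
  "nabla_x \<phi> (nabla_x \<phi> (T (\<lambda>j. of_real (\<rho> j)))) p + nabla_y \<phi> (nabla_y \<phi> (T (\<lambda>j. of_real (\<rho> j)))) p
     = T (\<lambda>j. of_real ((\<Sum>k\<in>F. lam k * \<rho> k * r k) * r j - lam j * \<rho> j)) p"
  unfolding nabla_x_T nabla_y_T torus_map_add
  by (rule fun_cong[OF torus_map_cong])
     (simp add: lam_eq sum.distrib sum_negf algebra_simps power2_eq_square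
           flip: of_real_mult of_real_add of_real_diff)

lemma sum_lam: "(\<Sum>j\<in>F. lam j * (r j)\<^sup>2) = 2"
  using sum_norm_sq unfolding lam_def by (simp add: mult.commute)

lemma tension_phi: "tension \<phi> = T (\<lambda>j. of_real ((2 - lam j) * r j))"
proof
  fix p
  have "(\<Sum>k\<in>F. lam k * r k * r k) = 2"
    using sum_lam by (simp add: power2_eq_square mult.assoc)
  then have "tension \<phi> p = T (\<lambda>j. of_real (2 * r j - lam j * r j)) p"
    unfolding tension_def nabla_phi(1,2)[symmetric] nabla_sq_T_real by simp
  then show "tension \<phi> p = T (\<lambda>j. of_real ((2 - lam j) * r j)) p"
    by (simp only: left_diff_distrib)
qed

lemma inner_pdx_pdx: "pdx \<phi> p \<bullet> pdx \<phi> p = 1"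
  and inner_pdy_pdy: "pdy \<phi> p \<bullet> pdy \<phi> p = 1"
  and inner_pdx_pdy: "pdx \<phi> p \<bullet> pdy \<phi> p = 0"
  unfolding pdx_torus_map pdy_torus_map
  using sum_Re_sq sum_Im_sq sum_Re_Im by (simp_all add: inner_T power2_eq_square algebra_simps)

lemma norm_phi: "norm (\<phi> p) = 1"
  using sum_r_sq by (simp add: norm_eq_sqrt_inner inner_T power2_eq_square)

lemma isometric_immersion_phi: "isometric_immersion_sphere \<phi>"
  unfolding isometric_immersion_sphere_def
  using smooth2_torus_map norm_phi inner_pdx_pdx inner_pdy_pdy inner_pdx_pdy by blast

lemma norm_tension_sq: "(norm (tension \<phi> p))\<^sup>2 = (\<Sum>j\<in>F. ((2 - lam j) * r j)\<^sup>2)"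
  unfolding power2_norm_eq_inner tension_phi by (simp add: inner_T power2_eq_square)

lemma CMC_phi: "CMC \<phi>"
proof -
  have "norm (tension \<phi> p) = sqrt (\<Sum>j\<in>F. ((2 - lam j) * r j)\<^sup>2)" for p
    by (simp add: real_sqrt_unique[OF norm_tension_sq])
  then show ?thesis
    unfolding CMC_def mean_curv_def
    by (intro exI[of _ "sqrt (\<Sum>j\<in>F. ((2 - lam j) * r j)\<^sup>2) / 2"]) simp
qed

lemma not_harmonic_phi:
  assumes "j \<in> F" "r j \<noteq> 0" "lam j \<noteq> 2"
  shows "\<not> harmonic \<phi>"
proof
  assume "harmonic \<phi>"
  then have "(\<Sum>j\<in>F. ((2 - lam j) * r j)\<^sup>2) = 0"
    using norm_tension_sq[of "(0, 0)"] unfolding harmonic_def by simp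
  moreover have "(\<Sum>j\<in>F. ((2 - lam j) * r j)\<^sup>2) > 0"
    using assms finite_F by (intro sum_pos2[of F j]) auto
  ultimately show False by simp
qed

lemma lam_sq: "j \<in> F \<Longrightarrow> (lam j)\<^sup>2 = 4 * lam j - \<alpha> * \<beta>"
proof -
  assume "j \<in> F"
  then have "(lam j - \<alpha>) * (lam j - \<beta>) = 0"
    using two_norms unfolding lam_def by auto
  moreover have "4 * lam j = \<alpha> * lam j + \<beta> * lam j"
    by (simp flip: alpha_plus_beta add: algebra_simps)
  ultimately show ?thesis
    by (simp add: power2_eq_square algebra_simps)
qed

lemma sum_lam_sq: "(\<Sum>j\<in>F. (lam j)\<^sup>2 * (r j)\<^sup>2) = 8 - \<alpha> * \<beta>"
proof -
  have "(\<Sum>j\<in>F. (lam j)\<^sup>2 * (r j)\<^sup>2) = (\<Sum>j\<in>F. 4 * (lam j * (r j)\<^sup>2) - \<alpha> * \<beta> * (r j)\<^sup>2)"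
    by (intro sum.cong refl) (simp add: lam_sq algebra_simps)
  then show ?thesis
    by (simp add: sum_subtractf sum_distrib_left[symmetric] sum_lam sum_r_sq)
qed

lemma sphere_curv_tension:
  "sphere_curv (pdx \<phi> p) (tension \<phi> p) (pdx \<phi> p) = - tension \<phi> p"
  "sphere_curv (pdy \<phi> p) (tension \<phi> p) (pdy \<phi> p) = - tension \<phi> p"
proof -
  have "tension \<phi> p \<bullet> pdx \<phi> p = 0" "tension \<phi> p \<bullet> pdy \<phi> p = 0"
    by (simp_all add: tension_phi pdx_torus_map pdy_torus_map inner_T)
  then show "sphere_curv (pdx \<phi> p) (tension \<phi> p) (pdx \<phi> p) = - tension \<phi> p"
    "sphere_curv (pdy \<phi> p) (tension \<phi> p) (pdy \<phi> p) = - tension \<phi> p"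
    by (simp_all add: sphere_curv_unit_orth inner_pdx_pdx inner_pdy_pdy)
qed

lemma biharmonic_phi: "biharmonic \<phi>"
  unfolding biharmonic_def
proof
  fix p
  define \<rho> where "\<rho> j = (2 - lam j) * r j" for j
  have tau: "tension \<phi> = T (\<lambda>j. of_real (\<rho> j))"
    unfolding \<rho>_def by (rule tension_phi)
  have "(\<Sum>k\<in>F. lam k * \<rho> k * r k) = 2 * (\<Sum>k\<in>F. lam k * (r k)\<^sup>2) - (\<Sum>k\<in>F. (lam k)\<^sup>2 * (r k)\<^sup>2)"
    unfolding \<rho>_def by (simp add: sum_distrib_left sum_subtractf algebra_simps power2_eq_square)
  then have coeff: "(\<Sum>k\<in>F. lam k * \<rho> k * r k) = \<alpha> * \<beta> - 4"
    using sum_lam sum_lam_sq by simp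
  have "bitension \<phi> p = T (\<lambda>j. of_real ((\<alpha> * \<beta> - 4) * r j - lam j * \<rho> j)) p + 2 *\<^sub>R tension \<phi> p"
    unfolding bitension_def Let_def sphere_curv_tension
    by (simp add: tau nabla_sq_T_real coeff scaleR_2)
  also have "\<dots> = T (\<lambda>j. of_real ((\<alpha> * \<beta> - 4) * r j - lam j * \<rho> j + 2 * \<rho> j)) p"
    unfolding tau scaleR_torus_map torus_map_add by simp
  also have "\<dots> = T (\<lambda>j. 0) p"
    unfolding \<rho>_def
    by (intro fun_cong[OF torus_map_cong]) (simp add: algebra_simps lam_sq[unfolded power2_eq_square])
  finally show "bitension \<phi> p = 0"
    by (simp add: torus_map_zero)
qed

end

section \<open>Independence of trigonometric terms\<close>

lemma abs_eq_if_cos_mult_eq: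
  fixes \<alpha> \<beta> :: real
  assumes "\<And>t. cos (t * \<alpha>) = cos (t * \<beta>)"
  shows "\<bar>\<alpha>\<bar> = \<bar>\<beta>\<bar>"
proof (rule ccontr)
  assume ne: "\<bar>\<alpha>\<bar> \<noteq> \<bar>\<beta>\<bar>"
  define t where "t = 1 / (\<bar>\<alpha>\<bar> + \<bar>\<beta>\<bar>)"
  have pos: "\<bar>\<alpha>\<bar> + \<bar>\<beta>\<bar> > 0" using ne by auto
  then have "t > 0" unfolding t_def by simp
  moreover have "t * \<bar>\<alpha>\<bar> \<le> 1" "t * \<bar>\<beta>\<bar> \<le> 1"
    using pos unfolding t_def by (simp_all add: divide_le_eq_1)
  moreover have "cos (t * \<bar>\<alpha>\<bar>) = cos (t * \<bar>\<beta>\<bar>)"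
  proof -
    have "cos (t * \<bar>x\<bar>) = cos (t * x)" for x
      using \<open>t > 0\<close> cos_abs_real[of "t * x"] by (simp add: abs_mult)
    then show ?thesis using assms[of t] by simp
  qed
  ultimately have "t * \<bar>\<alpha>\<bar> = t * \<bar>\<beta>\<bar>"
    using pi_gt3 cos_inj_pi[of "t * \<bar>\<alpha>\<bar>" "t * \<bar>\<beta>\<bar>"] by simp
  with \<open>t > 0\<close> ne show False by simp
qed

lemma eq_or_eq_neg_if_abs_inner_eq:
  fixes \<xi> \<eta> :: "'a::real_inner"
  assumes "\<And>w. \<bar>\<xi> \<bullet> w\<bar> = \<bar>\<eta> \<bullet> w\<bar>"
  shows "\<eta> = \<xi> \<or> \<eta> = - \<xi>"
proof -
  from assms[of \<xi>] assms[of \<eta>] have sq: "\<xi> \<bullet> \<xi> = \<bar>\<xi> \<bullet> \<eta>\<bar>" "\<eta> \<bullet> \<eta> = \<bar>\<xi> \<bullet> \<eta>\<bar>"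
    by (simp_all add: inner_commute)
  show ?thesis
  proof (cases "\<xi> \<bullet> \<eta> \<ge> 0")
    case True
    then have "(\<xi> - \<eta>) \<bullet> (\<xi> - \<eta>) = 0"
      using sq by (simp add: inner_diff_left inner_diff_right inner_commute[of \<eta> \<xi>])
    then show ?thesis by simp
  next
    case False
    then have "(\<xi> + \<eta>) \<bullet> (\<xi> + \<eta>) = 0"
      using sq by (simp add: inner_add_left inner_add_right inner_commute[of \<eta> \<xi>])
    then show ?thesis by (simp add: eq_neg_iff_add_eq_0 add.commute)
  qed
qed

lemma ex_cos_inner_neq:
  fixes \<xi> \<eta> :: "'a::real_inner"
  assumes "\<eta> \<noteq> \<xi>" "\<eta> \<noteq> - \<xi>"
  shows "\<exists>h. cos (\<xi> \<bullet> h) \<noteq> cos (\<eta> \<bullet> h)"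
proof (rule ccontr)
  assume "\<nexists>h. cos (\<xi> \<bullet> h) \<noteq> cos (\<eta> \<bullet> h)"
  then have cos_eq: "cos (\<xi> \<bullet> h) = cos (\<eta> \<bullet> h)" for h by blast
  have "\<bar>\<xi> \<bullet> w\<bar> = \<bar>\<eta> \<bullet> w\<bar>" for w
    by (rule abs_eq_if_cos_mult_eq) (simp only: inner_scaleR_right[symmetric] cos_eq)
  then show False
    using assms eq_or_eq_neg_if_abs_inner_eq by blast
qed

definition trig_term :: "('i \<Rightarrow> 'a::real_inner) \<Rightarrow> ('i \<Rightarrow> real) \<Rightarrow> ('i \<Rightarrow> real) \<Rightarrow> 'i \<Rightarrow> 'a \<Rightarrow> real" where
  "trig_term \<xi> C S j p = C j * cos (\<xi> j \<bullet> p) + S j * sin (\<xi> j \<bullet> p)"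

text \<open>The operator f \<mapsto> (f(p+h) + f(p-h))/2 - cos(\<xi>_k \<bullet> h) f(p) multiplies the
  coefficients of frequency \<xi>_i by cos(\<xi>_i \<bullet> h) - cos(\<xi>_k \<bullet> h), so it kills frequency \<xi>_k.\<close>
lemma trig_term_shift:
  "(trig_term \<xi> C S i (p + h) + trig_term \<xi> C S i (p - h)) / 2 - cos (\<xi> k \<bullet> h) * trig_term \<xi> C S i p
   = trig_term \<xi> (\<lambda>i. (cos (\<xi> i \<bullet> h) - cos (\<xi> k \<bullet> h)) * C i) (\<lambda>i. (cos (\<xi> i \<bullet> h) - cos (\<xi> k \<bullet> h)) * S i) i p"
  unfolding trig_term_def
  by (simp add: cos_add cos_diff sin_add sin_diff algebra_simps)

lemma trig_sum_eq_zero_imp_coeffs_zero: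
  fixes \<xi> :: "'i \<Rightarrow> 'a::real_inner"
  assumes "finite K" "j0 \<notin> K" "\<xi> j0 \<noteq> 0" "\<forall>j\<in>K. \<xi> j \<noteq> \<xi> j0 \<and> \<xi> j \<noteq> - \<xi> j0"
    and "\<forall>p. (\<Sum>j\<in>insert j0 K. trig_term \<xi> C S j p) = 0"
  shows "C j0 = 0 \<and> S j0 = 0"
  using assms
proof (induction K arbitrary: C S rule: finite_induct)
  case empty
  have C: "C j0 = 0"
    using empty.prems(4)[rule_format, of 0] by (simp add: trig_term_def)
  define p where "p = (pi / 2 / (\<xi> j0 \<bullet> \<xi> j0)) *\<^sub>R \<xi> j0"
  have "\<xi> j0 \<bullet> p = pi / 2"
    using empty.prems(2) unfolding p_def by simp
  then have "sin (\<xi> j0 \<bullet> p) = 1" by (simp only: sin_pi_half)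
  then have "S j0 = 0"
    using empty.prems(4)[rule_format, of p] C by (simp add: trig_term_def)
  with C show ?case by simp
next
  case (insert j K)
  obtain h where h: "cos (\<xi> j0 \<bullet> h) \<noteq> cos (\<xi> j \<bullet> h)"
    using ex_cos_inner_neq[of "\<xi> j" "\<xi> j0"] insert.prems by auto
  define f where "f i = cos (\<xi> i \<bullet> h) - cos (\<xi> j \<bullet> h)" for i
  have "(\<Sum>i\<in>insert j0 K. trig_term \<xi> (\<lambda>i. f i * C i) (\<lambda>i. f i * S i) i p) = 0" for p
  proof -
    let ?F = "\<lambda>p. \<Sum>i\<in>insert j0 (insert j K). trig_term \<xi> C S i p"
    have "(?F (p + h) + ?F (p - h)) / 2 - cos (\<xi> j \<bullet> h) * ?F p
        = (\<Sum>i\<in>insert j0 (insert j K). trig_term \<xi> (\<lambda>i. f i * C i) (\<lambda>i. f i * S i) i p)"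
      unfolding f_def trig_term_shift[symmetric]
      by (simp add: sum.distrib sum_subtractf sum_divide_distrib sum_distrib_left add_divide_distrib)
    also have "\<dots> = (\<Sum>i\<in>insert j0 K. trig_term \<xi> (\<lambda>i. f i * C i) (\<lambda>i. f i * S i) i p)"
      using insert.hyps insert.prems by (simp add: trig_term_def f_def insert_commute)
    finally show ?thesis
      using insert.prems(4) by simp
  qed
  then have "f j0 * C j0 = 0 \<and> f j0 * S j0 = 0"
    using insert.prems by (intro insert.IH) auto
  moreover have "f j0 \<noteq> 0" using h unfolding f_def by simp
  ultimately show ?case by simp
qed

context biharmonic_torus
begin

lemma full_map_phi:
  assumes spanning: "\<And>v. (\<And>u. u \<in> F \<times> UNIV \<Longrightarrow> v \<bullet> E u = 0) \<Longrightarrow> v = 0"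
    and r_nonzero: "\<And>j. j \<in> F \<Longrightarrow> r j \<noteq> 0"
    and freq_nonzero: "\<And>j. j \<in> F \<Longrightarrow> \<xi> j \<noteq> 0"
    and freq_distinct: "\<And>i j. i \<in> F \<Longrightarrow> j \<in> F \<Longrightarrow> i \<noteq> j \<Longrightarrow> \<xi> i \<noteq> \<xi> j \<and> \<xi> i \<noteq> - \<xi> j"
  shows "full_map \<phi>"
  unfolding full_map_def
proof (intro notI, elim exE conjE)
  fix v :: "real^'n"
  assume "v \<noteq> 0" and orth: "\<forall>p. v \<bullet> \<phi> p = 0"
  define C where "C j = r j * (v \<bullet> E (j, False))" for j
  define S where "S j = r j * (v \<bullet> E (j, True))" for j
  have trig_sum: "(\<Sum>j\<in>F. trig_term \<xi> C S j z) = 0" for z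
  proof -
    have "(\<Sum>j\<in>F. trig_term \<xi> C S j z) = v \<bullet> \<phi> (Re z, Im z)"
      unfolding torus_map_def trig_term_def C_def S_def inner_complex_def
      by (simp add: inner_sum_right algebra_simps)
    then show ?thesis using orth by simp
  qed
  have "C j = 0 \<and> S j = 0" if "j \<in> F" for j
  proof (rule trig_sum_eq_zero_imp_coeffs_zero[where K = "F - {j}"])
    show "\<forall>p. (\<Sum>i\<in>insert j (F - {j}). trig_term \<xi> C S i p) = 0"
      using that trig_sum by (simp add: insert_absorb)
  qed (use that finite_F freq_nonzero freq_distinct in auto)
  then have "v \<bullet> E u = 0" if "u \<in> F \<times> UNIV" for u
    using that r_nonzero unfolding C_def S_def by (cases u; cases "snd u") auto
  then show False
    using spanning \<open>v \<noteq> 0\<close> by blast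
qed

end

section \<open>Gaussian-integer frequencies\<close>

definition gaussian_int :: "complex \<Rightarrow> bool" where
  "gaussian_int z \<longleftrightarrow> Re z \<in> \<int> \<and> Im z \<in> \<int>"

lemma ex_orthonormal_basis_indexed:
  assumes "finite I" "card I = CARD('n::finite)"
  obtains E :: "'i \<Rightarrow> real^'n" where
    "\<And>u v. u \<in> I \<Longrightarrow> v \<in> I \<Longrightarrow> E u \<bullet> E v = (if u = v then 1 else 0)"
    "\<And>v. (\<And>u. u \<in> I \<Longrightarrow> v \<bullet> E u = 0) \<Longrightarrow> v = 0"
proof -
  obtain g where g: "bij_betw g I (UNIV :: 'n set)"
    using finite_same_card_bij[of I "UNIV :: 'n set"] assms by auto
  show ?thesis
  proof
    show "(axis (g u) 1 :: real^'n) \<bullet> axis (g v) 1 = (if u = v then 1 else 0)" if "u \<in> I" "v \<in> I" for u v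
      using that bij_betw_imp_inj_on[OF g] by (auto simp: inner_axis_axis inj_on_eq_iff)
    show "v = 0" if "\<And>u. u \<in> I \<Longrightarrow> v \<bullet> axis (g u) (1::real) = 0" for v
    proof -
      have "v $ k = 0" for k
      proof -
        obtain u where "u \<in> I" "g u = k"
          using bij_betw_imp_surj_on[OF g] by (metis UNIV_I imageE)
        then show ?thesis using that[of u] by (simp add: inner_axis)
      qed
      then show ?thesis by (simp add: vec_eq_iff)
    qed
  qed
qed

locale biharmonic_config =
  fixes F :: "complex set" and w :: "complex \<Rightarrow> real" and P Q :: real
  assumes finite_F: "finite F"
    and P_neq_Q: "P \<noteq> Q"
    and sum_w: "sum w F = 1"
    and sum_w_norm_sq: "(\<Sum>\<gamma>\<in>F. w \<gamma> * (cmod \<gamma>)\<^sup>2) = (P + Q) / 2"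
    and sum_w_sq: "(\<Sum>\<gamma>\<in>F. of_real (w \<gamma>) * \<gamma>\<^sup>2) = 0"
    and gaussian: "\<And>\<gamma>. \<gamma> \<in> F \<Longrightarrow> gaussian_int \<gamma>"
    and nonzero: "\<And>\<gamma>. \<gamma> \<in> F \<Longrightarrow> \<gamma> \<noteq> 0"
    and no_antipodes: "\<And>\<gamma>. \<gamma> \<in> F \<Longrightarrow> - \<gamma> \<notin> F"
    and w_pos: "\<And>\<gamma>. \<gamma> \<in> F \<Longrightarrow> 0 < w \<gamma>"
    and two_norms: "\<And>\<gamma>. \<gamma> \<in> F \<Longrightarrow> (cmod \<gamma>)\<^sup>2 = P \<or> (cmod \<gamma>)\<^sup>2 = Q"
begin

definition scale :: real where
  "scale = sqrt ((P + Q) / 4)"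

lemma F_nonempty: "F \<noteq> {}"
  using sum_w by auto

lemma sum_P_Q_pos: "0 < P + Q"
proof -
  obtain \<gamma>0 where "\<gamma>0 \<in> F" using F_nonempty by blast
  then have "0 < (\<Sum>\<gamma>\<in>F. w \<gamma> * (cmod \<gamma>)\<^sup>2)"
    using finite_F w_pos nonzero
    by (intro sum_pos2[of F \<gamma>0]) (auto intro: mult_nonneg_nonneg less_imp_le)
  then show ?thesis using sum_w_norm_sq by simp
qed

lemma scale_pos: "0 < scale"
  and scale_sq: "scale\<^sup>2 = (P + Q) / 4"
  using sum_P_Q_pos unfolding scale_def by simp_all

lemma norm_sq_div_scale: "(cmod (\<gamma> / of_real scale))\<^sup>2 = (cmod \<gamma>)\<^sup>2 / scale\<^sup>2"
  by (simp add: norm_divide power_divide)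

lemma biharmonic_torus_rescaled:
  assumes "\<And>u v. u \<in> F \<times> UNIV \<Longrightarrow> v \<in> F \<times> UNIV \<Longrightarrow> E u \<bullet> E v = (if u = v then 1 else 0)"
  shows "biharmonic_torus E F (\<lambda>\<gamma>. \<gamma> / of_real scale) (\<lambda>\<gamma>. sqrt (w \<gamma>)) (P / scale\<^sup>2) (Q / scale\<^sup>2)"
proof
  have r_sq: "(sqrt (w \<gamma>))\<^sup>2 = w \<gamma>" if "\<gamma> \<in> F" for \<gamma>
    using w_pos[OF that] by simp
  show "(\<Sum>\<gamma>\<in>F. (sqrt (w \<gamma>))\<^sup>2) = 1"
    using sum_w by (simp add: r_sq)
  have "(\<Sum>\<gamma>\<in>F. (sqrt (w \<gamma>))\<^sup>2 * (cmod (\<gamma> / of_real scale))\<^sup>2) = (\<Sum>\<gamma>\<in>F. w \<gamma> * (cmod \<gamma>)\<^sup>2) / scale\<^sup>2"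
    by (simp add: r_sq norm_sq_div_scale sum_divide_distrib)
  also have "\<dots> = ((P + Q) / 2) / ((P + Q) / 4)"
    by (simp only: sum_w_norm_sq scale_sq)
  also have "\<dots> = 2"
    using sum_P_Q_pos by (simp add: field_simps)
  finally show "(\<Sum>\<gamma>\<in>F. (sqrt (w \<gamma>))\<^sup>2 * (cmod (\<gamma> / of_real scale))\<^sup>2) = 2" .
  have "(\<Sum>\<gamma>\<in>F. of_real ((sqrt (w \<gamma>))\<^sup>2) * (\<gamma> / of_real scale)\<^sup>2)
      = (\<Sum>\<gamma>\<in>F. of_real (w \<gamma>) * \<gamma>\<^sup>2) / of_real (scale\<^sup>2)"
    by (simp add: r_sq sum_divide_distrib power_divide)
  then show "(\<Sum>\<gamma>\<in>F. of_real ((sqrt (w \<gamma>))\<^sup>2) * (\<gamma> / of_real scale)\<^sup>2) = 0"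
    using sum_w_sq by simp
  show "P / scale\<^sup>2 + Q / scale\<^sup>2 = 4"
    using scale_pos scale_sq by (simp add: add_divide_distrib[symmetric] field_simps)
  show "(cmod (\<gamma> / of_real scale))\<^sup>2 = P / scale\<^sup>2 \<or> (cmod (\<gamma> / of_real scale))\<^sup>2 = Q / scale\<^sup>2"
    if "\<gamma> \<in> F" for \<gamma>
    using two_norms[OF that] by (auto simp: norm_sq_div_scale)
qed (use finite_F assms in auto)

lemma ex_biharmonic_torus:
  assumes card: "CARD('n::finite) = 2 * card F"
  shows "\<exists>(a::real) (\<phi>::real \<times> real \<Rightarrow> real^'n). a > 0 \<and> square_torus_periodic a \<phi> \<and>
           isometric_immersion_sphere \<phi> \<and> full_map \<phi> \<and> proper_biharmonic \<phi> \<and> CMC \<phi>"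
proof -
  have "finite (F \<times> (UNIV :: bool set))" "card (F \<times> (UNIV :: bool set)) = CARD('n)"
    using finite_F card by (simp_all add: card_cartesian_product)
  then obtain E :: "complex \<times> bool \<Rightarrow> real^'n" where
    orthonormal: "\<And>u v. u \<in> F \<times> UNIV \<Longrightarrow> v \<in> F \<times> UNIV \<Longrightarrow> E u \<bullet> E v = (if u = v then 1 else 0)"
    and spanning: "\<And>v. (\<And>u. u \<in> F \<times> UNIV \<Longrightarrow> v \<bullet> E u = 0) \<Longrightarrow> v = 0"
    by (rule ex_orthonormal_basis_indexed) blast
  interpret biharmonic_torus E F "\<lambda>\<gamma>. \<gamma> / of_real scale" "\<lambda>\<gamma>. sqrt (w \<gamma>)" "P / scale\<^sup>2" "Q / scale\<^sup>2"
    using orthonormal by (rule biharmonic_torus_rescaled)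
  have "square_torus_periodic scale \<phi>"
    using gaussian scale_pos unfolding gaussian_int_def
    by (intro square_torus_periodic_torus_map) simp
  moreover have "full_map \<phi>"
  proof (rule full_map_phi)
    show "\<gamma> / of_real scale \<noteq> \<delta> / of_real scale \<and> \<gamma> / of_real scale \<noteq> - (\<delta> / of_real scale)"
      if "\<gamma> \<in> F" "\<delta> \<in> F" "\<gamma> \<noteq> \<delta>" for \<gamma> \<delta>
      using that no_antipodes scale_pos by (auto simp: divide_eq_eq)
  qed (use spanning nonzero w_pos scale_pos in \<open>auto simp: less_imp_neq[symmetric]\<close>)
  moreover obtain \<gamma>0 where "\<gamma>0 \<in> F" using F_nonempty by blast
  then have "\<not> harmonic \<phi>"
  proof (rule not_harmonic_phi)
    show "lam \<gamma>0 \<noteq> 2"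
      using two_norms[OF \<open>\<gamma>0 \<in> F\<close>] P_neq_Q scale_sq scale_pos
      unfolding lam_def norm_sq_div_scale by (auto simp: field_simps)
  qed (use w_pos[OF \<open>\<gamma>0 \<in> F\<close>] in simp)
  ultimately show ?thesis
    using scale_pos isometric_immersion_phi biharmonic_phi CMC_phi
    unfolding proper_biharmonic_def by blast
qed

end

section \<open>An explicit configuration\<close>

text \<open>Contains exactly one of z and -z for every z \<noteq> 0.\<close>
definition upper_half :: "complex \<Rightarrow> bool" where
  "upper_half z \<longleftrightarrow> 0 < Im z \<or> (Im z = 0 \<and> 0 < Re z)"

lemma upper_half_nonzero: "upper_half z \<Longrightarrow> z \<noteq> 0"
  unfolding upper_half_def by auto

lemma upper_half_uminus: "upper_half z \<Longrightarrow> \<not> upper_half (- z)"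
  unfolding upper_half_def by auto

locale config_construction =
  fixes m :: nat
  assumes three_le_m: "3 \<le> m"
begin

definition npairs :: nat where
  "npairs = (m - 2) div 2"

definition radius :: nat where
  "radius = 4 * (\<Prod>s\<in>{2..npairs + 1}. s\<^sup>2 + 1)"

text \<open>rot_freq s = R (s + i) / (s - i), a Gaussian integer because s^2 + 1 divides R.\<close>
definition rot_freq :: "nat \<Rightarrow> complex" where
  "rot_freq s = of_nat (radius div (s\<^sup>2 + 1)) * (of_nat s + \<i>)\<^sup>2"

definition pair_freqs :: "complex set" where
  "pair_freqs = rot_freq ` {2..npairs + 1}"

definition head :: "complex set" where
  "head = (if even m then {4 * \<i>} else {3 + 5 * \<i>, - 3 + 5 * \<i>})"

definition head_norm :: real where
  "head_norm = (if even m then 16 else 34)"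

definition freqs :: "complex set" where
  "freqs = insert (of_nat radius) (head \<union> pair_freqs \<union> (*) \<i> ` pair_freqs)"

definition pair_weight :: real where
  "pair_weight = (1/2 - 8 / (real radius)\<^sup>2) / (2 * real npairs)"

text \<open>The weight 8 / R^2 of the real point R makes it contribute 8 to \<Sum> w \<gamma>^2, cancelling the
  head; the pairs z, i z cancel among themselves. Each circle then carries total weight 1/2.\<close>
definition weight :: "complex \<Rightarrow> real" where
  "weight \<gamma> = (if \<gamma> = of_nat radius then 8 / (real radius)\<^sup>2
     else if \<gamma> \<in> head then 1 / (2 * real (card head)) else pair_weight)"

lemma card_head: "card head = (if even m then 1 else 2)"
  unfolding head_def by (simp add: complex_eq_iff)

lemma m_eq: "m = 1 + card head + 2 * npairs"
  using three_le_m unfolding card_head npairs_def by presburger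

lemma npairs_pos_if_even: "even m \<Longrightarrow> 1 \<le> npairs"
  using three_le_m unfolding npairs_def by presburger

lemma radius_pos: "0 < radius"
  unfolding radius_def by (simp add: prod_pos)

lemma radius_npairs_0: "npairs = 0 \<Longrightarrow> radius = 4"
  unfolding radius_def by simp

lemma radius_ge_20: "1 \<le> npairs \<Longrightarrow> 20 \<le> radius"
proof -
  assume "1 \<le> npairs"
  then have "(\<Prod>s\<in>{2..npairs + 1}. s\<^sup>2 + 1) = 5 * (\<Prod>s\<in>{2..npairs + 1} - {2}. s\<^sup>2 + 1)"
    by (subst prod.remove[of _ 2]) auto
  moreover have "1 \<le> (\<Prod>s\<in>{2..npairs + 1} - {2}. s\<^sup>2 + (1::nat))"
    by (rule prod_ge_1) simp
  ultimately show "20 \<le> radius" unfolding radius_def by linarith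
qed

lemma head_norm_neq_radius: "head_norm \<noteq> (real radius)\<^sup>2"
proof (cases "npairs = 0")
  case True
  then have "odd m" using npairs_pos_if_even by auto
  then show ?thesis using radius_npairs_0[OF True] unfolding head_norm_def by simp
next
  case False
  then have "(20::real) \<le> real radius" using radius_ge_20 by simp
  then have "(20::real)\<^sup>2 \<le> (real radius)\<^sup>2" by (rule power_mono) simp
  then show ?thesis unfolding head_norm_def by auto
qed

lemma head_facts:
  assumes "\<gamma> \<in> head"
  shows "(cmod \<gamma>)\<^sup>2 = head_norm" "0 < Im \<gamma>" "gaussian_int \<gamma>"
  using assms unfolding head_def head_norm_def gaussian_int_def
  by (auto simp: cmod_power2 split: if_splits)

lemma sum_head_sq: "(\<Sum>\<gamma>\<in>head. \<gamma>\<^sup>2) / (2 * of_nat (card head)) = - 8"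
  unfolding head_def card_head by (simp add: power2_eq_square algebra_simps complex_eq_iff)

lemma rot_freq_facts:
  assumes s: "s \<in> {2..npairs + 1}"
  shows "cmod (rot_freq s) = radius" "0 < Re (rot_freq s)" "0 < Im (rot_freq s)"
    "gaussian_int (rot_freq s)" "rot_freq s * (of_nat s - \<i>) = of_nat radius * (of_nat s + \<i>)"
proof -
  define k where "k = radius div (s\<^sup>2 + 1)"
  have "s\<^sup>2 + 1 dvd radius"
    unfolding radius_def using s by (intro dvd_mult dvd_prodI) auto
  then have k: "k * (s\<^sup>2 + 1) = radius"
    unfolding k_def by (rule dvd_div_mult_self)
  then have "0 < k" using radius_pos by (cases k) auto
  have "1 < real s" using s by simp
  then have "1 < (real s)\<^sup>2" using one_less_power[of "real s" 2] by simp
  have rot: "rot_freq s = of_nat k * (of_nat s + \<i>)\<^sup>2"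
    unfolding rot_freq_def k_def ..
  show "cmod (rot_freq s) = radius"
    unfolding rot norm_mult norm_power cmod_power2 by (simp flip: k add: algebra_simps)
  show "0 < Re (rot_freq s)" "0 < Im (rot_freq s)" "gaussian_int (rot_freq s)"
    unfolding rot gaussian_int_def using \<open>0 < k\<close> \<open>1 < (real s)\<^sup>2\<close> \<open>1 < real s\<close>
    by (simp_all add: power2_eq_square)
  have "(of_nat s + \<i>)\<^sup>2 * (of_nat s - \<i>) = of_nat (s\<^sup>2 + 1) * (of_nat s + \<i>)"
    by (simp add: power2_eq_square algebra_simps)
  then show "rot_freq s * (of_nat s - \<i>) = of_nat radius * (of_nat s + \<i>)"
    unfolding rot by (simp flip: k add: algebra_simps)
qed

lemma inj_on_rot_freq: "inj_on rot_freq {2..npairs + 1}"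
proof
  fix s t assume st: "s \<in> {2..npairs + 1}" "t \<in> {2..npairs + 1}" and eq: "rot_freq s = rot_freq t"
  have "of_nat radius * ((of_nat s + \<i>) * (of_nat t - \<i>)) = rot_freq s * (of_nat s - \<i>) * (of_nat t - \<i>)"
    using rot_freq_facts(5)[OF st(1)] by (simp add: mult_ac)
  also have "\<dots> = of_nat radius * ((of_nat t + \<i>) * (of_nat s - \<i>))"
    using rot_freq_facts(5)[OF st(2)] by (simp add: eq mult_ac)
  finally have "(of_nat s + \<i>) * (of_nat t - \<i>) = (of_nat t + \<i>) * (of_nat s - \<i> :: complex)"
    using radius_pos by simp
  then have "Im ((of_nat s + \<i>) * (of_nat t - \<i>)) = Im ((of_nat t + \<i>) * (of_nat s - \<i> :: complex))"
    by (rule arg_cong)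
  then show "s = t" by simp
qed

lemma i_rot_freq_facts:
  assumes "z \<in> pair_freqs"
  shows "cmod (\<i> * z) = radius" "Re (\<i> * z) < 0" "0 < Im (\<i> * z)" "gaussian_int (\<i> * z)"
  using assms rot_freq_facts unfolding pair_freqs_def gaussian_int_def by (auto simp: norm_mult)

lemma freqs_upper_half: "\<gamma> \<in> freqs \<Longrightarrow> upper_half \<gamma>"
  using radius_pos head_facts(2) rot_freq_facts(3) i_rot_freq_facts(3)
  unfolding freqs_def pair_freqs_def upper_half_def by auto

lemma radius_notin: "of_nat radius \<notin> head \<union> pair_freqs \<union> (*) \<i> ` pair_freqs"
proof -
  have "Im (of_nat radius) = 0" by simp
  then show ?thesis
    using head_facts(2) rot_freq_facts(3) i_rot_freq_facts(3) unfolding pair_freqs_def by fastforce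
qed

lemma head_disjoint: "head \<inter> (pair_freqs \<union> (*) \<i> ` pair_freqs) = {}"
  using head_facts(1) rot_freq_facts(1) i_rot_freq_facts(1) head_norm_neq_radius
  unfolding pair_freqs_def by fastforce

lemma sum_freqs:
  "sum g freqs = g (of_nat radius) + sum g head + (\<Sum>z\<in>pair_freqs. g z + g (\<i> * z))"
proof -
  have fin: "finite head" "finite pair_freqs"
    unfolding head_def pair_freqs_def by auto
  then have "sum g freqs = g (of_nat radius) + sum g head + sum g (pair_freqs \<union> (*) \<i> ` pair_freqs)"
    using radius_notin head_disjoint unfolding freqs_def Un_assoc
    by (simp add: sum.union_disjoint add.assoc)
  moreover have "pair_freqs \<inter> (*) \<i> ` pair_freqs = {}"
    using rot_freq_facts(2) i_rot_freq_facts(2) unfolding pair_freqs_def by fastforce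
  moreover have "inj_on ((*) \<i>) pair_freqs"
    by (rule inj_onI) simp
  ultimately show ?thesis
    using fin by (simp add: sum.union_disjoint sum.reindex sum.distrib)
qed

lemma card_pair_freqs: "card pair_freqs = npairs"
  unfolding pair_freqs_def card_image[OF inj_on_rot_freq] by simp

lemma card_freqs: "card freqs = m"
  using sum_freqs[of "\<lambda>_. 1 :: nat"] m_eq card_pair_freqs by simp

lemma pair_weight_total: "2 * real npairs * pair_weight = 1/2 - 8 / (real radius)\<^sup>2"
proof (cases "npairs = 0")
  case True
  then show ?thesis using radius_npairs_0 by simp
next
  case False
  then show ?thesis unfolding pair_weight_def by simp
qed

lemma pair_weight_pos: "pair_freqs \<noteq> {} \<Longrightarrow> 0 < pair_weight"
proof -
  assume "pair_freqs \<noteq> {}"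
  then have "1 \<le> npairs" unfolding pair_freqs_def by auto
  then have "(20::real) \<le> real radius" using radius_ge_20 by simp
  then have "(20::real)\<^sup>2 \<le> (real radius)\<^sup>2" by (rule power_mono) simp
  then have "8 / (real radius)\<^sup>2 < 1/2" by (simp add: divide_less_eq)
  with \<open>1 \<le> npairs\<close> show ?thesis unfolding pair_weight_def by simp
qed

lemma weight_radius: "weight (of_nat radius) = 8 / (real radius)\<^sup>2"
  unfolding weight_def by simp

lemma weight_head: "\<gamma> \<in> head \<Longrightarrow> weight \<gamma> = 1 / (2 * real (card head))"
  using radius_notin unfolding weight_def by auto

lemma weight_pair: "z \<in> pair_freqs \<Longrightarrow> weight z = pair_weight \<and> weight (\<i> * z) = pair_weight"
  using radius_notin head_disjoint unfolding weight_def by (auto simp: image_iff)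

lemma sum_weight_freqs:
  fixes g :: "complex \<Rightarrow> 'a::real_vector"
  shows "(\<Sum>\<gamma>\<in>freqs. weight \<gamma> *\<^sub>R g \<gamma>) = (8 / (real radius)\<^sup>2) *\<^sub>R g (of_nat radius)
     + (1 / (2 * real (card head))) *\<^sub>R (\<Sum>\<gamma>\<in>head. g \<gamma>) + pair_weight *\<^sub>R (\<Sum>z\<in>pair_freqs. g z + g (\<i> * z))"
  unfolding sum_freqs[of "\<lambda>\<gamma>. weight \<gamma> *\<^sub>R g \<gamma>"] scaleR_sum_right
  by (simp add: weight_radius weight_head weight_pair scaleR_add_right cong: sum.cong)

lemma biharmonic_config_freqs: "biharmonic_config freqs weight head_norm ((real radius)\<^sup>2)"
proof unfold_locales
  have ch: "card head \<noteq> 0" unfolding card_head by simp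
  have R: "real radius \<noteq> 0" using radius_pos by simp
  show "finite freqs"
    unfolding freqs_def head_def pair_freqs_def by auto
  show "head_norm \<noteq> (real radius)\<^sup>2"
    by (rule head_norm_neq_radius)
  show "sum weight freqs = 1"
    using sum_weight_freqs[of "\<lambda>_. 1 :: real"] pair_weight_total ch
    by (simp add: card_pair_freqs field_simps)
  have "(\<Sum>\<gamma>\<in>head. (cmod \<gamma>)\<^sup>2) = real (card head) * head_norm"
    using head_facts(1) by simp
  moreover have "(\<Sum>z\<in>pair_freqs. (cmod z)\<^sup>2 + (cmod (\<i> * z))\<^sup>2) = (\<Sum>z\<in>pair_freqs. 2 * (real radius)\<^sup>2)"
    using rot_freq_facts(1) unfolding pair_freqs_def by (intro sum.cong) (auto simp: norm_mult)
  ultimately show "(\<Sum>\<gamma>\<in>freqs. weight \<gamma> * (cmod \<gamma>)\<^sup>2) = (head_norm + (real radius)\<^sup>2) / 2"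
    using sum_weight_freqs[of "\<lambda>\<gamma>. (cmod \<gamma>)\<^sup>2"] pair_weight_total ch R card_pair_freqs
    by (simp add: field_simps)
  show "(\<Sum>\<gamma>\<in>freqs. of_real (weight \<gamma>) * \<gamma>\<^sup>2) = 0"
    using sum_weight_freqs[of "\<lambda>\<gamma>. \<gamma>\<^sup>2"] sum_head_sq R
    by (simp add: scaleR_conv_of_real field_simps)
  fix \<gamma> assume "\<gamma> \<in> freqs"
  then show "\<gamma> \<noteq> 0" "- \<gamma> \<notin> freqs"
    using freqs_upper_half upper_half_nonzero upper_half_uminus by blast+
  show "gaussian_int \<gamma>" "0 < weight \<gamma>" "(cmod \<gamma>)\<^sup>2 = head_norm \<or> (cmod \<gamma>)\<^sup>2 = (real radius)\<^sup>2"
    using \<open>\<gamma> \<in> freqs\<close> radius_pos card_head head_facts rot_freq_facts(1,4) i_rot_freq_facts(1,4)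
      weight_radius weight_head weight_pair pair_weight_pos
    unfolding freqs_def pair_freqs_def by (auto simp: gaussian_int_def)
qed

end

lemma ex_biharmonic_config:
  assumes "3 \<le> m"
  shows "\<exists>F w P Q. biharmonic_config F w P Q \<and> card F = m"
proof -
  interpret config_construction m
    using assms by unfold_locales
  show ?thesis
    using biharmonic_config_freqs card_freqs by blast
qed

theorem theorem3p11:
  assumes "odd (CARD('n::finite) - 1)" and "CARD('n) - 1 \<ge> 5"
  shows "\<exists>(a::real) (\<phi>::real \<times> real \<Rightarrow> real^'n). a > 0 \<and> square_torus_periodic a \<phi> \<and>
           isometric_immersion_sphere \<phi> \<and> full_map \<phi> \<and> proper_biharmonic \<phi> \<and> CMC \<phi>"
proof -
  define m where "m = CARD('n) div 2"
  have "CARD('n) = 2 * m" "3 \<le> m"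
    using assms unfolding m_def by presburger+
  moreover obtain F w P Q where "biharmonic_config F w P Q" "card F = m"
    using ex_biharmonic_config[OF \<open>3 \<le> m\<close>] by blast
  ultimately show ?thesis
    using biharmonic_config.ex_biharmonic_torus by metis
qed

end
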